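(* Let $(Y_t,\lambda_t)_{t\in\mathbb{N}_0}$ be a nonstationary INARCH(1) process with linear trend: conditionally on $\sigma(Y_0,\lambda_0,\ldots,Y_{t-1},\lambda_{t-1})$, $Y_t\sim\mathrm{Pois}(\lambda_t)$, where \[\lambda_t=aY_{t-1}+b_0+b_1t,\qquad a\in(0,1),\ b_0\ge0,\ b_1>0,\ t\in\mathbb{N}_0,\] and $\lambda_0$ has a finite absolute fourth moment. Given observations $Y_0,\ldots,Y_n$, define $w_t=\big(t-\frac{n+1}{2}\big)\big/\sqrt{\sum_{s=1}^n\big(s-\frac{n+1}{2}\big)^2}$ and $\widehat\theta_1=\sum_{t=1}^n w_tY_t$. Then for every $K>0$, \[\mathbb P(\widehat\theta_1>K)\to1\qquad (n\to\infty).\] *)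

theory Defs
  imports "HOL-Probability.Probability"
begin

definition pois_prob :: "real \<Rightarrow> nat \<Rightarrow> real" where
  "pois_prob r k = r ^ k / fact k * exp (- r)"

definition gen_sigma :: "'a measure \<Rightarrow> ('a \<Rightarrow> real) set \<Rightarrow> 'a measure" where
  "gen_sigma M Xs = sigma (space M) {X -` B \<inter> space M | X B. X \<in> Xs \<and> B \<in> sets borel}"

text \<open>Past information at time t: sigma(lambda_0, Y_0, ..., Y_{t-1}) (lambda_1..lambda_t are functions of these).\<close>
definition past_sigma :: "'a measure \<Rightarrow> (nat \<Rightarrow> 'a \<Rightarrow> nat) \<Rightarrow> (nat \<Rightarrow> 'a \<Rightarrow> real) \<Rightarrow> nat \<Rightarrow> 'a measure" where
  "past_sigma M Y lam t = gen_sigma M ({lam 0} \<union> {(\<lambda>x. real (Y s x)) | s. s < t})"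

definition trend_weight :: "nat \<Rightarrow> nat \<Rightarrow> real" where
  "trend_weight n t = (real t - (real n + 1) / 2) /
      sqrt (\<Sum>s = 1..n. (real s - (real n + 1) / 2)^2)"

definition theta1_hat :: "(nat \<Rightarrow> 'a \<Rightarrow> nat) \<Rightarrow> nat \<Rightarrow> 'a \<Rightarrow> real" where
  "theta1_hat Y n x = (\<Sum>t = 1..n. trend_weight n t * real (Y t x))"

end

(*
  Write Y_t = a Y_(t-1) + b0 + b1 t + e_t, where the innovations e_t = Y_t - lambda_t are
  martingale differences with respect to the past. The trend weights w_t are nondecreasing,
  sum to 0 and satisfy sum_t w_t t = s_n = sqrt (n (n^2 - 1) / 12), so summation by parts
  gives the pathwise bound

    (1 - a) theta1_hat >= b1 s_n + sum_t w_t e_t - a (n + 1) / (2 s_n) (Y_0 + Y_n).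

  The conditional Poisson law gives E e_t^2 = E lambda_t = O(t) and orthogonality of the e_t,
  so E (sum_t w_t e_t)^2 = O(n) because sum_t w_t^2 = 1, while E (Y_0 + Y_n) = O(n).
  As s_n grows like n^(3/2), the Markov inequality shows that theta1_hat <= K has
  probability O(1/n).
*)

theory Submission
  imports Defs "HOL-Real_Asymp.Real_Asymp"
begin

section \<open>Trend weights and summation by parts\<close>

definition centred_index_ss :: "nat \<Rightarrow> real" where
  "centred_index_ss n = real n * (real n - 1) * (real n + 1) / 12"

lemma centred_index_ss_nonneg: "0 \<le> centred_index_ss n"
  unfolding centred_index_ss_def by (cases n) auto

lemma centred_index_ss_pos: "2 \<le> n \<Longrightarrow> 0 < centred_index_ss n"
  unfolding centred_index_ss_def by simp

lemma sum_of_nat_squares: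
  "(\<Sum>s=1..n. (real s)^2) = real n * (real n + 1) * (2 * real n + 1) / 6"
  by (induction n) (auto simp: algebra_simps power2_eq_square)

lemma sum_of_nat: "(\<Sum>s=1..n. real s) = real n * (real n + 1) / 2"
  using double_gauss_sum_from_Suc_0[where 'a=real, of n] by simp

lemma sum_centred_index: "(\<Sum>t=1..n. real t - (real n + 1) / 2) = 0"
  unfolding sum_subtractf sum_of_nat by simp

lemma sum_centred_index_sq:
  "(\<Sum>s=1..n. (real s - (real n + 1) / 2)^2) = centred_index_ss n"
proof -
  have "(real s - (real n + 1) / 2)^2 = (real s)^2 - (real n + 1) * real s + ((real n + 1) / 2)^2" for s
    by (simp add: power2_eq_square field_simps)
  then have "(\<Sum>s=1..n. (real s - (real n + 1) / 2)^2)
      = (\<Sum>s=1..n. (real s)^2) - (real n + 1) * (\<Sum>s=1..n. real s) + real n * ((real n + 1) / 2)^2"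
    by (simp add: sum.distrib sum_subtractf sum_distrib_left)
  also have "\<dots> = centred_index_ss n"
    unfolding sum_of_nat_squares sum_of_nat centred_index_ss_def by (simp add: field_simps power2_eq_square)
  finally show ?thesis .
qed

lemma trend_weight_eq:
  "trend_weight n t = (real t - (real n + 1) / 2) / sqrt (centred_index_ss n)"
  unfolding trend_weight_def sum_centred_index_sq ..

lemma sum_trend_weight: "(\<Sum>t=1..n. trend_weight n t) = 0"
  unfolding trend_weight_eq sum_divide_distrib[symmetric] sum_centred_index by simp

lemma sum_trend_weight_mult_index:
  "(\<Sum>t=1..n. trend_weight n t * real t) = sqrt (centred_index_ss n)"
proof -
  define c where "c = (real n + 1) / 2"
  have "(\<Sum>t=1..n. trend_weight n t * real t)
      = (\<Sum>t=1..n. (real t - c)^2 + c * (real t - c)) / sqrt (centred_index_ss n)"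
    unfolding trend_weight_eq c_def[symmetric] sum_divide_distrib
    by (simp add: power2_eq_square algebra_simps)
  also have "\<dots> = centred_index_ss n / sqrt (centred_index_ss n)"
    unfolding sum.distrib sum_distrib_left[symmetric] c_def sum_centred_index sum_centred_index_sq
    by simp
  finally show ?thesis
    using real_div_sqrt[OF centred_index_ss_nonneg] by simp
qed

lemma sum_trend_weight_sq: "2 \<le> n \<Longrightarrow> (\<Sum>t=1..n. (trend_weight n t)^2) = 1"
  unfolding trend_weight_eq power_divide sum_divide_distrib[symmetric] sum_centred_index_sq
  using centred_index_ss_pos[of n] by simp

lemma incseq_trend_weight: "incseq (trend_weight n)"
  unfolding trend_weight_eq incseq_def by (auto intro!: divide_right_mono simp: centred_index_ss_nonneg)

lemma abs_trend_weight_le: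
  assumes "t \<le> n + 1"
  shows "\<bar>trend_weight n t\<bar> \<le> (real n + 1) / 2 / sqrt (centred_index_ss n)"
proof -
  have "\<bar>real t - (real n + 1) / 2\<bar> \<le> (real n + 1) / 2"
    using assms by (auto simp: abs_le_iff field_simps)
  then show ?thesis
    unfolding trend_weight_eq abs_divide abs_of_nonneg[OF real_sqrt_ge_zero[OF centred_index_ss_nonneg]]
    by (rule divide_right_mono) (simp add: centred_index_ss_nonneg)
qed

lemma autoregressive_weighted_sum_ge:
  fixes w y r :: "nat \<Rightarrow> real"
  assumes w: "incseq w" and y: "\<And>t. 0 \<le> y t" and a: "0 \<le> a"
    and rec: "\<And>t. y (Suc t) = a * y t + r (Suc t)"
  shows "(\<Sum>t=1..n. w t * r t) + a * (w 0 * y 0 - w n * y n) \<le> (1 - a) * (\<Sum>t=1..n. w t * y t)"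
proof -
  have shift: "(\<Sum>t=1..n. f t) = (\<Sum>k<n. f (Suc k))" for f :: "nat \<Rightarrow> real"
    by (simp add: sum.atLeast1_atMost_eq)
  have lagged: "(\<Sum>t=1..n. w t * y t) = a * (\<Sum>k<n. w (Suc k) * y k) + (\<Sum>t=1..n. w t * r t)"
    unfolding shift rec by (simp add: algebra_simps sum.distrib sum_distrib_left)
  have "w 0 * y 0 + (\<Sum>t=1..n. w t * y t) = (\<Sum>k<n. w k * y k) + w n * y n"
    unfolding shift using sum.lessThan_Suc_shift[of "\<lambda>k. w k * y k" n] by simp
  also have "(\<Sum>k<n. w k * y k) \<le> (\<Sum>k<n. w (Suc k) * y k)"
    using w y by (intro sum_mono mult_right_mono) (auto dest: incseq_SucD)
  finally have "a * (w 0 * y 0 + (\<Sum>t=1..n. w t * y t) - w n * y n) \<le> a * (\<Sum>k<n. w (Suc k) * y k)"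
    using a by (intro mult_left_mono) auto
  then show ?thesis
    using lagged by (simp add: algebra_simps)
qed

lemma linear_trend_recursion_le:
  fixes m :: "nat \<Rightarrow> real"
  assumes a: "0 \<le> a" "a < 1" and b: "0 \<le> b0" "0 \<le> b1" and m0: "0 \<le> m 0"
    and rec: "\<And>t. m (Suc t) = a * m t + b0 + b1 * real (Suc t)"
  shows "m t \<le> (m 0 + (b0 + b1) / (1 - a)) * (real t + 1)"
proof -
  define C where "C = m 0 + (b0 + b1) / (1 - a)"
  have "(1 - a) * ((b0 + b1) / (1 - a)) = b0 + b1"
    using a by simp
  then have C: "0 \<le> C" "b0 + b1 \<le> (1 - a) * C"
    using a b m0 unfolding C_def by (simp_all add: distrib_left)
  have "m t \<le> C * (real t + 1)"
  proof (induction t)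
    case (Suc t)
    have "(b0 + b1) * (real t + 1) \<le> (1 - a) * C * (real t + 1)"
      using C by (intro mult_right_mono) auto
    moreover have "a * m t \<le> a * (C * (real t + 1))"
      using Suc.IH a by (intro mult_left_mono) auto
    moreover have "b0 \<le> b0 * (real t + 1)"
      using b mult_nonneg_nonneg[of b0 "real t"] by (simp add: distrib_left)
    ultimately show ?case
      using C unfolding rec by (simp add: algebra_simps)
  qed (use C_def m0 a b in simp)
  then show ?thesis
    unfolding C_def .
qed

section \<open>Poisson moments\<close>

lemma pois_prob_nonneg: "0 \<le> r \<Longrightarrow> 0 \<le> pois_prob r k"
  unfolding pois_prob_def by simp

lemma pois_prob_sums: "(\<lambda>k. pois_prob r k) sums 1"
proof -
  have "(\<lambda>k. r ^ k / fact k) sums exp r"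
    using exp_converges[of r] by (simp add: divide_inverse mult.commute)
  then have "(\<lambda>k. r ^ k / fact k * exp (- r)) sums (exp r * exp (- r))"
    by (rule sums_mult2)
  then show ?thesis
    unfolding pois_prob_def by (simp add: exp_minus)
qed

lemma Suc_mult_pois_prob_Suc: "real (Suc k) * pois_prob r (Suc k) = r * pois_prob r k"
  unfolding pois_prob_def by (simp add: field_simps del: of_nat_Suc)

lemma pois_prob_mean_sums: "(\<lambda>k. real k * pois_prob r k) sums r"
proof -
  have "(\<lambda>k. real (Suc k) * pois_prob r (Suc k)) sums (r * 1)"
    unfolding Suc_mult_pois_prob_Suc by (rule sums_mult[OF pois_prob_sums])
  then show ?thesis
    by (subst (asm) sums_Suc_iff) simp
qed

lemma pois_prob_second_moment_sums: "(\<lambda>k. (real k)^2 * pois_prob r k) sums (r^2 + r)"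
proof -
  have "(\<lambda>k. r * (real k * pois_prob r k + pois_prob r k)) sums (r * (r + 1))"
    by (intro sums_mult sums_add pois_prob_mean_sums pois_prob_sums)
  moreover have "r * (real k * pois_prob r k + pois_prob r k) = (real (Suc k))^2 * pois_prob r (Suc k)" for k
    unfolding power2_eq_square mult.assoc Suc_mult_pois_prob_Suc by (simp add: algebra_simps)
  ultimately have "(\<lambda>k. (real (Suc k))^2 * pois_prob r (Suc k)) sums (r^2 + r)"
    by (simp add: power2_eq_square distrib_left)
  then show ?thesis
    by (subst (asm) sums_Suc_iff) simp
qed

section \<open>Generated sigma-algebras and square integrability\<close>

lemma sets_gen_sigma:
  "sets (gen_sigma M Xs) = sigma_sets (space M) {X -` B \<inter> space M | X B. X \<in> Xs \<and> B \<in> sets borel}"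
  unfolding gen_sigma_def by (rule sets_measure_of) blast

lemma space_gen_sigma: "space (gen_sigma M Xs) = space M"
  unfolding gen_sigma_def by (rule space_measure_of) blast

lemma measurable_gen_sigma: "X \<in> Xs \<Longrightarrow> X \<in> borel_measurable (gen_sigma M Xs)"
  by (rule measurableI) (auto simp: space_gen_sigma sets_gen_sigma)

lemma subalgebra_gen_sigma:
  assumes "\<And>X. X \<in> Xs \<Longrightarrow> X \<in> borel_measurable M"
  shows "subalgebra M (gen_sigma M Xs)"
  unfolding subalgebra_def space_gen_sigma sets_gen_sigma
  using assms by (auto intro!: sets.sigma_sets_subset)

definition square_integrable :: "'a measure \<Rightarrow> ('a \<Rightarrow> real) \<Rightarrow> bool" where
  "square_integrable M f \<longleftrightarrow> f \<in> borel_measurable M \<and> integrable M (\<lambda>x. (f x)^2)"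

lemma square_integrableD:
  assumes "square_integrable M f"
  shows "f \<in> borel_measurable M" "integrable M (\<lambda>x. (f x)^2)"
  using assms unfolding square_integrable_def by auto

lemma integrable_mult_square_integrable:
  assumes "square_integrable M f" "square_integrable M g"
  shows "integrable M (\<lambda>x. f x * g x)"
proof (rule Bochner_Integration.integrable_bound[where f="\<lambda>x. (f x)^2 + (g x)^2"])
  have "\<bar>u * v\<bar> \<le> u^2 + v^2" for u v :: real
    using sum_squares_bound[of u v] sum_squares_bound[of u "- v"] by (simp add: abs_if)
  then show "AE x in M. norm (f x * g x) \<le> norm ((f x)^2 + (g x)^2)"
    by simp
qed (use assms in \<open>auto simp: square_integrable_def\<close>)

lemma square_integrable_add:
  assumes f: "square_integrable M f" and g: "square_integrable M g"
  shows "square_integrable M (\<lambda>x. f x + g x)"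
proof -
  have "integrable M (\<lambda>x. (f x)^2 + (g x)^2 + 2 * (f x * g x))"
    using square_integrableD[OF f] square_integrableD[OF g] integrable_mult_square_integrable[OF f g]
    by auto
  then show ?thesis
    using square_integrableD[OF f] square_integrableD[OF g]
    unfolding square_integrable_def by (simp add: power2_sum algebra_simps)
qed

lemma square_integrable_cmult: "square_integrable M f \<Longrightarrow> square_integrable M (\<lambda>x. c * f x)"
  unfolding square_integrable_def by (simp add: power_mult_distrib borel_measurable_times)

lemma square_integrable_diff:
  "square_integrable M f \<Longrightarrow> square_integrable M g \<Longrightarrow> square_integrable M (\<lambda>x. f x - g x)"
  using square_integrable_add[of M f "\<lambda>x. (-1) * g x"] square_integrable_cmult[of M g "-1"] by simp

lemma square_integrable_sum:
  "(\<And>i. i \<in> I \<Longrightarrow> square_integrable M (f i)) \<Longrightarrow> square_integrable M (\<lambda>x. \<Sum>i\<in>I. f i x)"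
proof (induction I rule: infinite_finite_induct)
  case (insert i I)
  then show ?case
    using square_integrable_add[of M "f i" "\<lambda>x. \<Sum>i\<in>I. f i x"] by simp
qed (simp_all add: square_integrable_def)

context finite_measure
begin

lemma square_integrable_const: "square_integrable M (\<lambda>x. c)"
  unfolding square_integrable_def by simp

lemma square_integrableD_integrable: "square_integrable M f \<Longrightarrow> integrable M f"
  unfolding square_integrable_def by (blast intro: square_integrable_imp_integrable)

lemma square_integrable_if_fourth_moment:
  assumes [measurable]: "f \<in> borel_measurable M" and "integrable M (\<lambda>x. \<bar>f x\<bar> ^ 4)"
  shows "square_integrable M f"
proof -
  have "(\<lambda>x. ((f x)^2)^2) = (\<lambda>x. \<bar>f x\<bar> ^ 4)"
    by (simp flip: power_mult)
  then show ?thesis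
    using assms unfolding square_integrable_def
    by (auto intro!: square_integrable_imp_integrable[of "\<lambda>x. (f x)^2"])
qed

end

lemma integrable_and_integral_eq_if_nn_integral_eq:
  fixes f g :: "'a \<Rightarrow> real"
  assumes f[measurable]: "f \<in> borel_measurable M" "AE x in M. 0 \<le> f x"
    and g: "integrable M g" "AE x in M. 0 \<le> g x"
    and eq: "(\<integral>\<^sup>+x. f x \<partial>M) = (\<integral>\<^sup>+x. g x \<partial>M)"
  shows "integrable M f" "integral\<^sup>L M f = integral\<^sup>L M g"
proof -
  have g_eq: "(\<integral>\<^sup>+x. g x \<partial>M) = ennreal (integral\<^sup>L M g)"
    using g by (rule nn_integral_eq_integral)
  then show f_int: "integrable M f"
    using f eq by (intro integrableI_nn_integral_finite) auto
  have "ennreal (integral\<^sup>L M f) = ennreal (integral\<^sup>L M g)"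
    using nn_integral_eq_integral[OF f_int f(2)] eq g_eq by simp
  then show "integral\<^sup>L M f = integral\<^sup>L M g"
    using integral_nonneg_AE[OF f(2)] integral_nonneg_AE[OF g(2)] by simp
qed

section \<open>The INARCH(1) process with linear trend\<close>

locale inarch1_linear_trend = prob_space M
  for M :: "'a measure" and Y :: "nat \<Rightarrow> 'a \<Rightarrow> nat" and lam :: "nat \<Rightarrow> 'a \<Rightarrow> real"
    and a b0 b1 :: real +
  assumes Y_measurable[measurable]: "\<And>t. Y t \<in> measurable M (count_space UNIV)"
    and lam0_measurable[measurable]: "lam 0 \<in> borel_measurable M"
    and lam0_nonneg: "AE x in M. lam 0 x \<ge> 0"
    and lam0_fourth_moment: "integrable M (\<lambda>x. \<bar>lam 0 x\<bar> ^ 4)"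
    and a_pos: "0 < a" and a_less_1: "a < 1" and b0_nonneg: "0 \<le> b0" and b1_pos: "0 < b1"
    and lam_rec: "\<And>t x. t \<ge> 1 \<Longrightarrow> lam t x = a * real (Y (t - 1) x) + b0 + b1 * real t"
    and cond_distr_Poisson: "\<And>t k. AE x in M.
           real_cond_exp M (past_sigma M Y lam t) (indicator {y \<in> space M. Y t y = k}) x
             = pois_prob (lam t x) k"
begin

abbreviation past :: "nat \<Rightarrow> 'a measure" where
  "past t \<equiv> past_sigma M Y lam t"

lemma lam_Suc: "lam (Suc t) = (\<lambda>x. a * real (Y t x) + b0 + b1 * real (Suc t))"
  using lam_rec[of "Suc t"] by auto

lemma subalgebra_past: "subalgebra M (past t)"
  unfolding past_sigma_def by (rule subalgebra_gen_sigma) auto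

lemma sigma_finite_subalgebra_past: "sigma_finite_subalgebra M (past t)"
  using subalgebra_past finite_measure_axioms
  by (intro finite_measure_subalgebra_is_sigma_finite)
     (simp add: finite_measure_subalgebra_def finite_measure_subalgebra_axioms_def)

lemma sets_pastD: "A \<in> sets (past t) \<Longrightarrow> A \<in> sets M"
  using subalgebra_past[of t] unfolding subalgebra_def by auto

lemma Y_measurable_past: "s < t \<Longrightarrow> (\<lambda>x. real (Y s x)) \<in> borel_measurable (past t)"
  unfolding past_sigma_def by (rule measurable_gen_sigma) auto

lemma lam_measurable_past:
  assumes "s \<le> t"
  shows "lam s \<in> borel_measurable (past t)"
proof (cases s)
  case 0
  then show ?thesis
    unfolding past_sigma_def by (auto intro: measurable_gen_sigma)
next
  case (Suc r)
  then have [measurable]: "(\<lambda>x. real (Y r x)) \<in> borel_measurable (past t)"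
    using assms by (intro Y_measurable_past) simp
  show ?thesis
    unfolding Suc lam_Suc by measurable
qed

lemma lam_measurable[measurable]: "lam t \<in> borel_measurable M"
  using measurable_from_subalg[OF subalgebra_past lam_measurable_past[of t t]] by simp

lemma lam_nonneg_AE: "AE x in M. 0 \<le> lam t x"
  using lam0_nonneg a_pos b0_nonneg b1_pos by (cases t) (auto simp: lam_Suc)

lemma nn_integral_indicator_Y_eq:
  assumes A: "A \<in> sets (past t)"
  shows "(\<integral>\<^sup>+x. ennreal (indicator A x * indicator {y \<in> space M. Y t y = k} x) \<partial>M)
       = (\<integral>\<^sup>+x. ennreal (indicator A x * pois_prob (lam t x) k) \<partial>M)"
proof -
  interpret sigma_finite_subalgebra M "past t"
    by (rule sigma_finite_subalgebra_past)
  have [measurable]: "A \<in> sets M" "indicator A \<in> borel_measurable (past t)"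
    using A sets_pastD by auto
  have int: "integrable M (\<lambda>x. indicator A x * indicator {y \<in> space M. Y t y = k} x :: real)"
    by (intro integrable_real_mult_indicator integrable_real_indicator) (auto simp: less_top[symmetric])
  have AE: "AE x in M. indicator A x * real_cond_exp M (past t) (indicator {y \<in> space M. Y t y = k}) x
      = indicator A x * pois_prob (lam t x) k"
    using cond_distr_Poisson[of t k] by eventually_elim simp
  have "integrable M (\<lambda>x. indicator A x * pois_prob (lam t x) k)"
    using real_cond_exp_intg(1)[OF int] integrable_cong_AE[OF _ _ AE] unfolding pois_prob_def by simp
  moreover have "(\<integral>x. indicator A x * indicator {y \<in> space M. Y t y = k} x \<partial>M)
      = (\<integral>x. indicator A x * pois_prob (lam t x) k \<partial>M)"
    using real_cond_exp_intg(2)[OF int] integral_cong_AE[OF _ _ AE] unfolding pois_prob_def by simp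
  ultimately show ?thesis
    using int lam_nonneg_AE[of t]
    by (subst (1 2) nn_integral_eq_integral)
       (auto elim!: eventually_mono intro!: mult_nonneg_nonneg pois_prob_nonneg)
qed

lemma nn_integral_cond_Poisson:
  assumes A: "A \<in> sets (past t)" and g: "\<And>k. 0 \<le> g k"
    and h: "\<And>r. 0 \<le> r \<Longrightarrow> (\<lambda>k. g k * pois_prob r k) sums h r"
  shows "(\<integral>\<^sup>+x. ennreal (indicator A x * g (Y t x)) \<partial>M)
       = (\<integral>\<^sup>+x. ennreal (indicator A x * h (lam t x)) \<partial>M)"
proof -
  have [measurable]: "A \<in> sets M"
    using A by (rule sets_pastD)
  have "(\<integral>\<^sup>+x. ennreal (indicator A x * g (Y t x)) \<partial>M)
      = (\<integral>\<^sup>+x. (\<Sum>k. g k * ennreal (indicator A x * indicator {y \<in> space M. Y t y = k} x)) \<partial>M)"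
  proof (rule nn_integral_cong)
    fix x assume "x \<in> space M"
    then have "(\<lambda>k. g k * ennreal (indicator A x * indicator {y \<in> space M. Y t y = k} x))
        = (\<lambda>k. if k = Y t x then ennreal (indicator A x * g (Y t x)) else 0)"
      using g by (auto simp: indicator_def ennreal_mult)
    then show "ennreal (indicator A x * g (Y t x))
        = (\<Sum>k. g k * ennreal (indicator A x * indicator {y \<in> space M. Y t y = k} x))"
      using sums_unique[OF sums_single] by simp
  qed
  also have "\<dots> = (\<Sum>k. g k * (\<integral>\<^sup>+x. ennreal (indicator A x * indicator {y \<in> space M. Y t y = k} x) \<partial>M))"
    by (simp add: nn_integral_suminf nn_integral_cmult)
  also have "\<dots> = (\<Sum>k. g k * (\<integral>\<^sup>+x. ennreal (indicator A x * pois_prob (lam t x) k) \<partial>M))"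
    using nn_integral_indicator_Y_eq[OF A] by simp
  also have "\<dots> = (\<integral>\<^sup>+x. (\<Sum>k. g k * ennreal (indicator A x * pois_prob (lam t x) k)) \<partial>M)"
    unfolding pois_prob_def by (simp add: nn_integral_suminf nn_integral_cmult)
  also have "\<dots> = (\<integral>\<^sup>+x. ennreal (indicator A x * h (lam t x)) \<partial>M)"
  proof (rule nn_integral_cong_AE)
    show "AE x in M. (\<Sum>k. g k * ennreal (indicator A x * pois_prob (lam t x) k))
        = ennreal (indicator A x * h (lam t x))"
      using lam_nonneg_AE[of t]
    proof eventually_elim
      case (elim x)
      have "(\<lambda>k. g k * (indicator A x * pois_prob (lam t x) k)) sums (indicator A x * h (lam t x))"
        using sums_mult[OF h[OF elim], of "indicator A x"] by (simp add: ac_simps)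
      moreover have "ennreal (g k) * ennreal (indicator A x * pois_prob (lam t x) k)
          = ennreal (g k * (indicator A x * pois_prob (lam t x) k))" for k
        using g elim by (simp add: ennreal_mult pois_prob_nonneg)
      ultimately show ?case
        using g elim by (auto intro!: suminf_ennreal_eq mult_nonneg_nonneg pois_prob_nonneg)
    qed
  qed
  finally show ?thesis .
qed

lemma nn_integral_indicator_Y:
  "A \<in> sets (past t) \<Longrightarrow>
    (\<integral>\<^sup>+x. ennreal (indicator A x * real (Y t x)) \<partial>M) = (\<integral>\<^sup>+x. ennreal (indicator A x * lam t x) \<partial>M)"
  using nn_integral_cond_Poisson[of A t real "\<lambda>r. r"] pois_prob_mean_sums by simp

lemma nn_integral_Y_sq:
  "(\<integral>\<^sup>+x. ennreal ((real (Y t x))^2) \<partial>M) = (\<integral>\<^sup>+x. ennreal ((lam t x)^2 + lam t x) \<partial>M)"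
proof -
  have "space M \<in> sets (past t)"
    using sets.top[of "past t"] by (simp add: past_sigma_def space_gen_sigma)
  from nn_integral_cond_Poisson[OF this, of "\<lambda>k. (real k)^2" "\<lambda>r. r^2 + r"]
  show ?thesis
    using pois_prob_second_moment_sums by (simp cong: nn_integral_cong)
qed

lemma square_integrable_Y_if_lam:
  assumes lam: "square_integrable M (lam t)"
  shows "square_integrable M (\<lambda>x. real (Y t x))"
proof -
  have "integrable M (\<lambda>x. (lam t x)^2 + lam t x)"
    using square_integrableD(2)[OF lam] square_integrableD_integrable[OF lam] by simp
  then have "integrable M (\<lambda>x. (real (Y t x))^2)"
    using lam_nonneg_AE[of t]
    by (intro integrable_and_integral_eq_if_nn_integral_eq(1)[OF _ _ _ _ nn_integral_Y_sq])
       (auto elim!: eventually_mono)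
  then show ?thesis
    unfolding square_integrable_def by simp
qed

lemma square_integrable_lam_Y:
  "square_integrable M (lam t) \<and> square_integrable M (\<lambda>x. real (Y t x))"
proof (induction t)
  case 0
  have "square_integrable M (lam 0)"
    using lam0_fourth_moment by (intro square_integrable_if_fourth_moment) simp
  then show ?case
    using square_integrable_Y_if_lam by blast
next
  case (Suc t)
  then have "square_integrable M (lam (Suc t))"
    unfolding lam_Suc by (intro square_integrable_add square_integrable_cmult square_integrable_const) auto
  then show ?case
    using square_integrable_Y_if_lam by blast
qed

lemma square_integrable_lam: "square_integrable M (lam t)"
  and square_integrable_Y: "square_integrable M (\<lambda>x. real (Y t x))"
  using square_integrable_lam_Y by auto

lemma cond_exp_Y: "AE x in M. real_cond_exp M (past t) (\<lambda>x. real (Y t x)) x = lam t x"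
proof -
  interpret sigma_finite_subalgebra M "past t"
    by (rule sigma_finite_subalgebra_past)
  show ?thesis
  proof (rule real_cond_exp_charact)
    fix A assume A: "A \<in> sets (past t)"
    then have A_M[measurable]: "A \<in> sets M"
      by (rule sets_pastD)
    have "integrable M (\<lambda>x. indicator A x * lam t x)"
      using integrable_mult_indicator[OF A_M square_integrableD_integrable[OF square_integrable_lam]] by simp
    then have "(\<integral>x. indicator A x * real (Y t x) \<partial>M) = (\<integral>x. indicator A x * lam t x \<partial>M)"
      using lam_nonneg_AE[of t]
      by (intro integrable_and_integral_eq_if_nn_integral_eq(2)[OF _ _ _ _ nn_integral_indicator_Y[OF A]])
         (auto elim!: eventually_mono)
    then show "(\<integral>x\<in>A. real (Y t x) \<partial>M) = (\<integral>x\<in>A. lam t x \<partial>M)"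
      unfolding set_lebesgue_integral_def by simp
  qed (auto intro: square_integrableD_integrable square_integrable_Y square_integrable_lam lam_measurable_past)
qed

lemma integral_mult_Y:
  assumes [measurable]: "Z \<in> borel_measurable (past t)" and Z: "square_integrable M Z"
  shows "(\<integral>x. Z x * real (Y t x) \<partial>M) = (\<integral>x. Z x * lam t x \<partial>M)"
proof -
  interpret sigma_finite_subalgebra M "past t"
    by (rule sigma_finite_subalgebra_past)
  have "(\<integral>x. Z x * real (Y t x) \<partial>M) = (\<integral>x. Z x * real_cond_exp M (past t) (\<lambda>x. real (Y t x)) x \<partial>M)"
    using Z square_integrable_Y
    by (intro real_cond_exp_intg(2)[symmetric] integrable_mult_square_integrable) auto
  also have "\<dots> = (\<integral>x. Z x * lam t x \<partial>M)"
    using cond_exp_Y[of t] square_integrableD(1)[OF Z]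
    by (intro integral_cong_AE) (auto elim!: eventually_mono)
  finally show ?thesis .
qed

lemma integral_Y: "(\<integral>x. real (Y t x) \<partial>M) = (\<integral>x. lam t x \<partial>M)"
  using integral_mult_Y[of "\<lambda>x. 1" t] square_integrable_const by simp

lemma integral_Y_sq: "(\<integral>x. (real (Y t x))^2 \<partial>M) = (\<integral>x. (lam t x)^2 \<partial>M) + (\<integral>x. lam t x \<partial>M)"
proof -
  have "integrable M (\<lambda>x. (lam t x)^2)" "integrable M (lam t)"
    using square_integrableD(2) square_integrableD_integrable square_integrable_lam by auto
  then show ?thesis
    using lam_nonneg_AE[of t]
    by (subst integrable_and_integral_eq_if_nn_integral_eq(2)[OF _ _ _ _ nn_integral_Y_sq])
       (auto elim!: eventually_mono)
qed

definition innov :: "nat \<Rightarrow> 'a \<Rightarrow> real" where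
  "innov t x = real (Y t x) - lam t x"

lemma square_integrable_innov: "square_integrable M (innov t)"
  unfolding innov_def[abs_def] by (rule square_integrable_diff[OF square_integrable_Y square_integrable_lam])

lemma innov_measurable_past: "s < t \<Longrightarrow> innov s \<in> borel_measurable (past t)"
  unfolding innov_def[abs_def]
  by (intro borel_measurable_diff Y_measurable_past lam_measurable_past) auto

lemma integral_mult_innov:
  assumes "Z \<in> borel_measurable (past t)" and Z: "square_integrable M Z"
  shows "(\<integral>x. Z x * innov t x \<partial>M) = 0"
  using integral_mult_Y[OF assms] Z
  by (simp add: innov_def right_diff_distrib integrable_mult_square_integrable
      square_integrable_Y square_integrable_lam)

lemma integral_innov_sq: "(\<integral>x. (innov t x)^2 \<partial>M) = (\<integral>x. lam t x \<partial>M)"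
proof -
  have "(\<lambda>x. (innov t x)^2) = (\<lambda>x. (real (Y t x))^2 - (lam t x)^2 - 2 * (lam t x * innov t x))"
    unfolding innov_def by (simp add: power2_eq_square algebra_simps)
  moreover have "(\<integral>x. lam t x * innov t x \<partial>M) = 0"
    using lam_measurable_past square_integrable_lam by (intro integral_mult_innov) auto
  ultimately show ?thesis
    using integral_Y_sq[of t] square_integrableD(2)[OF square_integrable_Y] square_integrableD(2)[OF square_integrable_lam]
      integrable_mult_square_integrable[OF square_integrable_lam square_integrable_innov]
    by simp
qed

lemma integral_weighted_innov_sum_sq:
  "(\<integral>x. (\<Sum>t=1..n. w t * innov t x)^2 \<partial>M) = (\<Sum>t=1..n. (w t)^2 * (\<integral>x. lam t x \<partial>M))"
proof (induction n)
  case (Suc n)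
  define Z where "Z x = (\<Sum>t=1..n. w t * innov t x)" for x
  have Z: "square_integrable M Z"
    unfolding Z_def by (intro square_integrable_sum square_integrable_cmult square_integrable_innov)
  have "Z \<in> borel_measurable (past (Suc n))"
    unfolding Z_def by (intro borel_measurable_sum borel_measurable_times borel_measurable_const innov_measurable_past) auto
  then have "(\<integral>x. Z x * innov (Suc n) x \<partial>M) = 0"
    using Z by (rule integral_mult_innov)
  moreover have "(\<lambda>x. (\<Sum>t=1..Suc n. w t * innov t x)^2)
      = (\<lambda>x. (Z x)^2 + 2 * w (Suc n) * (Z x * innov (Suc n) x) + (w (Suc n))^2 * (innov (Suc n) x)^2)"
    unfolding Z_def by (simp add: power2_eq_square algebra_simps)
  ultimately show ?case
    using Suc.IH square_integrableD(2)[OF Z] square_integrableD(2)[OF square_integrable_innov]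
      integrable_mult_square_integrable[OF Z square_integrable_innov]
    by (simp add: Z_def integral_innov_sq)
qed simp

lemma integral_lam_Suc:
  "(\<integral>x. lam (Suc t) x \<partial>M) = a * (\<integral>x. lam t x \<partial>M) + b0 + b1 * real (Suc t)"
  unfolding lam_Suc using square_integrableD_integrable[OF square_integrable_Y]
  by (simp add: integral_Y prob_space)

lemma integral_lam_linear_bound:
  obtains C where "0 \<le> C" "\<And>t. (\<integral>x. lam t x \<partial>M) \<le> C * (real t + 1)"
proof
  have "0 \<le> (\<integral>x. lam 0 x \<partial>M)"
    using lam_nonneg_AE by (rule integral_nonneg_AE)
  then show "0 \<le> (\<integral>x. lam 0 x \<partial>M) + (b0 + b1) / (1 - a)"
    using a_less_1 b0_nonneg b1_pos by simp
  show "(\<integral>x. lam t x \<partial>M) \<le> ((\<integral>x. lam 0 x \<partial>M) + (b0 + b1) / (1 - a)) * (real t + 1)" for t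
    using a_pos a_less_1 b0_nonneg b1_pos \<open>0 \<le> (\<integral>x. lam 0 x \<partial>M)\<close> integral_lam_Suc
    by (intro linear_trend_recursion_le) auto
qed

lemma theta1_hat_lower_bound:
  "b1 * sqrt (centred_index_ss n) + (\<Sum>t=1..n. trend_weight n t * innov t x)
     - a * ((real n + 1) / 2 / sqrt (centred_index_ss n)) * (real (Y 0 x) + real (Y n x))
   \<le> (1 - a) * theta1_hat Y n x"
proof -
  let ?w = "trend_weight n" and ?c = "(real n + 1) / 2 / sqrt (centred_index_ss n)"
  have ar: "(\<Sum>t=1..n. ?w t * (b0 + b1 * real t + innov t x))
      + a * (?w 0 * real (Y 0 x) - ?w n * real (Y n x)) \<le> (1 - a) * theta1_hat Y n x"
    unfolding theta1_hat_def using incseq_trend_weight a_pos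
    by (intro autoregressive_weighted_sum_ge) (auto simp: innov_def lam_Suc)
  have drift: "(\<Sum>t=1..n. ?w t * (b0 + b1 * real t + innov t x))
      = b1 * sqrt (centred_index_ss n) + (\<Sum>t=1..n. ?w t * innov t x)"
    using sum_trend_weight[of n] sum_trend_weight_mult_index[of n]
    by (simp add: distrib_left sum.distrib sum_distrib_left[symmetric] sum_distrib_right[symmetric]
        mult.left_commute[of _ b1])
  have "- ?c \<le> ?w 0" "?w n \<le> ?c"
    using abs_le_D2[OF abs_trend_weight_le[of 0 n]] abs_le_D1[OF abs_trend_weight_le[of n n]] by simp_all
  then have "- (?c * (real (Y 0 x) + real (Y n x))) \<le> ?w 0 * real (Y 0 x) - ?w n * real (Y n x)"
    unfolding distrib_left minus_add_distrib mult_minus_left[symmetric] diff_conv_add_uminus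
    by (intro add_mono mult_right_mono) auto
  from mult_left_mono[OF this, of a]
  have "- (a * ?c * (real (Y 0 x) + real (Y n x))) \<le> a * (?w 0 * real (Y 0 x) - ?w n * real (Y n x))"
    using a_pos by (simp add: mult.assoc)
  with ar drift show ?thesis
    by linarith
qed

lemma theta1_hat_le_imp:
  assumes "theta1_hat Y n x \<le> K" and K: "(1 - a) * K < b1 * sqrt (centred_index_ss n) / 3"
  shows "b1 * sqrt (centred_index_ss n) / 3
           \<le> a * ((real n + 1) / 2 / sqrt (centred_index_ss n)) * (real (Y 0 x) + real (Y n x))
    \<or> (b1 * sqrt (centred_index_ss n) / 3)^2 \<le> (\<Sum>t=1..n. trend_weight n t * innov t x)^2"
proof -
  let ?B = "b1 * sqrt (centred_index_ss n) / 3" and ?Z = "\<Sum>t=1..n. trend_weight n t * innov t x"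
  have "(1 - a) * theta1_hat Y n x \<le> (1 - a) * K"
    using assms a_less_1 by (intro mult_left_mono) auto
  then have "?B \<le> a * ((real n + 1) / 2 / sqrt (centred_index_ss n)) * (real (Y 0 x) + real (Y n x))
      \<or> ?Z < - ?B"
    using theta1_hat_lower_bound[of n x] K by linarith
  moreover have "?Z < - ?B \<Longrightarrow> ?B^2 \<le> ?Z^2"
    using power_mono[of ?B "- ?Z" 2] b1_pos centred_index_ss_nonneg[of n] by simp
  ultimately show ?thesis
    by blast
qed

lemma theta1_hat_measurable[measurable]: "(\<lambda>x. theta1_hat Y n x) \<in> borel_measurable M"
  unfolding theta1_hat_def by measurable

lemma prob_Y_endpoints_ge:
  assumes "0 < B" "0 \<le> c" and C: "\<And>t. (\<integral>x. lam t x \<partial>M) \<le> C * (real t + 1)"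
  shows "prob {x \<in> space M. B \<le> c * (real (Y 0 x) + real (Y n x))} \<le> c * (C * (real n + 2)) / B"
proof -
  have "(\<integral>x. c * (real (Y 0 x) + real (Y n x)) \<partial>M) = c * ((\<integral>x. lam 0 x \<partial>M) + (\<integral>x. lam n x \<partial>M))"
    using square_integrableD_integrable[OF square_integrable_Y] by (simp add: integral_Y)
  also have "\<dots> \<le> c * (C * (real n + 2))"
    using C[of 0] C[of n] assms(2) by (intro mult_left_mono) (auto simp: algebra_simps)
  finally show ?thesis
    using assms square_integrableD_integrable[OF square_integrable_Y]
    by (intro order_trans[OF integral_Markov_inequality_measure[OF _ sets.top]] divide_right_mono) auto
qed

lemma prob_weighted_innov_sum_sq_ge:
  assumes n: "2 \<le> n" and "0 < B"
    and C: "0 \<le> C" "\<And>t. (\<integral>x. lam t x \<partial>M) \<le> C * (real t + 1)"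
  shows "prob {x \<in> space M. B \<le> (\<Sum>t=1..n. trend_weight n t * innov t x)^2} \<le> C * (real n + 1) / B"
proof -
  have Z: "square_integrable M (\<lambda>x. \<Sum>t=1..n. trend_weight n t * innov t x)"
    by (intro square_integrable_sum square_integrable_cmult square_integrable_innov)
  have "(\<integral>x. (\<Sum>t=1..n. trend_weight n t * innov t x)^2 \<partial>M)
      = (\<Sum>t=1..n. (trend_weight n t)^2 * (\<integral>x. lam t x \<partial>M))"
    by (rule integral_weighted_innov_sum_sq)
  also have "\<dots> \<le> (\<Sum>t=1..n. (trend_weight n t)^2 * (C * (real n + 1)))"
    using C by (intro sum_mono mult_left_mono order_trans[OF C(2)]) auto
  also have "\<dots> = C * (real n + 1)"
    using sum_trend_weight_sq[OF n] by (simp add: sum_distrib_right[symmetric])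
  finally show ?thesis
    using assms square_integrableD[OF Z]
    by (intro order_trans[OF integral_Markov_inequality_measure[OF _ sets.top]] divide_right_mono) auto
qed

lemma prob_theta1_hat_le_bound:
  assumes n: "2 \<le> n" and C: "0 \<le> C" "\<And>t. (\<integral>x. lam t x \<partial>M) \<le> C * (real t + 1)"
    and K: "(1 - a) * K < b1 * sqrt (centred_index_ss n) / 3"
  shows "prob {x \<in> space M. theta1_hat Y n x \<le> K}
    \<le> 3 * a * C / b1 * ((real n + 1) * (real n + 2) / (2 * centred_index_ss n))
      + 9 * C / b1^2 * ((real n + 1) / centred_index_ss n)"
proof -
  define S where "S = sqrt (centred_index_ss n)"
  define B where "B = b1 * S / 3"
  define c where "c = a * ((real n + 1) / 2 / S)"
  define Z where "Z x = (\<Sum>t=1..n. trend_weight n t * innov t x)" for x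
  have S: "0 < S" "S^2 = centred_index_ss n"
    using centred_index_ss_pos[OF n] unfolding S_def by simp_all
  have B: "0 < B" and c: "0 \<le> c"
    using S a_pos b1_pos unfolding B_def c_def by simp_all
  have [measurable]: "Z \<in> borel_measurable M"
    unfolding Z_def
    by (intro square_integrableD(1) square_integrable_sum square_integrable_cmult square_integrable_innov)
  have "{x \<in> space M. theta1_hat Y n x \<le> K}
      \<subseteq> {x \<in> space M. B \<le> c * (real (Y 0 x) + real (Y n x))} \<union> {x \<in> space M. B^2 \<le> (Z x)^2}"
    using theta1_hat_le_imp[OF _ K] unfolding B_def c_def Z_def S_def by auto
  then have "prob {x \<in> space M. theta1_hat Y n x \<le> K}
      \<le> prob {x \<in> space M. B \<le> c * (real (Y 0 x) + real (Y n x))} + prob {x \<in> space M. B^2 \<le> (Z x)^2}"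
    by (intro order_trans[OF finite_measure_mono measure_Un_le]) auto
  also have "\<dots> \<le> c * (C * (real n + 2)) / B + C * (real n + 1) / B^2"
    unfolding Z_def using n B c C by (intro add_mono prob_Y_endpoints_ge prob_weighted_innov_sum_sq_ge) auto
  also have "\<dots> = 3 * a * C / b1 * ((real n + 1) * (real n + 2) / (2 * centred_index_ss n))
      + 9 * C / b1^2 * ((real n + 1) / centred_index_ss n)"
    unfolding B_def c_def S(2)[symmetric] using S(1) b1_pos by (simp add: field_simps power2_eq_square)
  finally show ?thesis .
qed

lemma prob_theta1_hat_gt_tendsto_1:
  assumes "0 < K"
  shows "(\<lambda>n. prob {x \<in> space M. theta1_hat Y n x > K}) \<longlonglongrightarrow> 1"
proof -
  obtain C where C: "0 \<le> C" "\<And>t. (\<integral>x. lam t x \<partial>M) \<le> C * (real t + 1)"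
    using integral_lam_linear_bound by blast
  define \<beta> where "\<beta> n = 3 * a * C / b1 * ((real n + 1) * (real n + 2) / (2 * centred_index_ss n))
      + 9 * C / b1^2 * ((real n + 1) / centred_index_ss n)" for n
  have "\<beta> \<longlonglongrightarrow> 3 * a * C / b1 * 0 + 9 * C / b1^2 * 0"
    unfolding \<beta>_def centred_index_ss_def by (intro tendsto_intros; real_asymp)
  then have \<beta>: "(\<lambda>n. 1 - \<beta> n) \<longlonglongrightarrow> 1"
    by (auto intro: tendsto_eq_intros)
  have "filterlim (\<lambda>n. sqrt (centred_index_ss n)) at_top sequentially"
    unfolding centred_index_ss_def by real_asymp
  then have "eventually (\<lambda>n. 3 * (1 - a) * K / b1 < sqrt (centred_index_ss n)) sequentially"
    by (simp add: filterlim_at_top_dense)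
  then have "eventually (\<lambda>n. 1 - \<beta> n \<le> prob {x \<in> space M. theta1_hat Y n x > K}) sequentially"
    using eventually_ge_at_top[of 2]
  proof eventually_elim
    case (elim n)
    then have "(1 - a) * K < b1 * sqrt (centred_index_ss n) / 3"
      using b1_pos by (simp add: field_simps)
    then have "prob {x \<in> space M. theta1_hat Y n x \<le> K} \<le> \<beta> n"
      unfolding \<beta>_def using elim C by (intro prob_theta1_hat_le_bound)
    moreover have "{x \<in> space M. theta1_hat Y n x > K} = space M - {x \<in> space M. theta1_hat Y n x \<le> K}"
      by auto
    ultimately show ?case
      using prob_compl[of "{x \<in> space M. theta1_hat Y n x \<le> K}"] by simp
  qed
  then show ?thesis
    by (rule tendsto_sandwich[OF _ always_eventually \<beta> tendsto_const]) simp
qed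

end

theorem proposition5p2:
  fixes M :: "'a measure" and Y :: "nat \<Rightarrow> 'a \<Rightarrow> nat" and lam :: "nat \<Rightarrow> 'a \<Rightarrow> real"
    and a b0 b1 :: real
  assumes "prob_space M"
    and "\<And>t. Y t \<in> measurable M (count_space UNIV)"
    and "lam 0 \<in> borel_measurable M"
    and "AE x in M. lam 0 x \<ge> 0"
    and "integrable M (\<lambda>x. \<bar>lam 0 x\<bar> ^ 4)"
    and "0 < a" and "a < 1" and "0 \<le> b0" and "0 < b1"
    and "\<And>t x. t \<ge> 1 \<Longrightarrow> lam t x = a * real (Y (t - 1) x) + b0 + b1 * real t"
    and "\<And>t k. AE x in M.
           real_cond_exp M (past_sigma M Y lam t) (indicator {y \<in> space M. Y t y = k}) x
             = pois_prob (lam t x) k"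
  shows "\<forall>K > 0. (\<lambda>n. measure M {x \<in> space M. theta1_hat Y n x > K}) \<longlonglongrightarrow> 1"
proof -
  interpret inarch1_linear_trend M Y lam a b0 b1
    using assms unfolding inarch1_linear_trend_def inarch1_linear_trend_axioms_def by blast
  show ?thesis
    using prob_theta1_hat_gt_tendsto_1 by blast
qed

end
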